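(* Let $n,m,k$ be integers with $n\geq m\geq 1$ and $k\geq 3$. Then $$ gr_{k}(K_{3} : S(n,m))\geq \begin{cases} \max\{5\cdot\frac{n}{2},\,n+2m+1\} + m(k-3)+1 & \text{ if $n$ is even,}\\ \max\{5\cdot\frac{n-1}{2},\,n+2m+1\}+ m(k-3)+ 2 & \text{ if $n$ is odd.} \end{cases} $$
   Context: For integers $n\geq m\geq 0$, the double star $S(n,m)$ is the graph obtained from the disjoint union of the stars $K_{1,n}$ and $K_{1,m}$ by adding an edge between their centers. A $k$-coloring of a graph is an assignment of one of $k$ colors to each edge. A subgraph is rainbow if all its edges have distinct colors and monochromatic if all its edges have the same color. For graphs $G,H$ and a positive integer $k$, the Gallai–Ramsey number $gr_k(G:H)$ is the minimum integer $N$ such that every $k$-coloring of the edges of the complete graph $K_N$ contains either a rainbow copy of $G$ or a monochromatic copy of $H$. *)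

theory Defs
  imports Main
begin

text \<open>Values on the diagonal are irrelevant.\<close>
definition edge_coloring :: "nat \<Rightarrow> nat \<Rightarrow> (nat \<Rightarrow> nat \<Rightarrow> nat) \<Rightarrow> bool" where
  "edge_coloring N k c \<longleftrightarrow>
     (\<forall>x<N. \<forall>y<N. x \<noteq> y \<longrightarrow> c x y = c y x \<and> c x y < k)"

definition has_rainbow_K3 :: "nat \<Rightarrow> (nat \<Rightarrow> nat \<Rightarrow> nat) \<Rightarrow> bool" where
  "has_rainbow_K3 N c \<longleftrightarrow>
     (\<exists>x<N. \<exists>y<N. \<exists>z<N. x \<noteq> y \<and> y \<noteq> z \<and> x \<noteq> z \<and>
        c x y \<noteq> c y z \<and> c y z \<noteq> c x z \<and> c x y \<noteq> c x z)"

definition has_mono_double_star :: "nat \<Rightarrow> nat \<Rightarrow> nat \<Rightarrow> (nat \<Rightarrow> nat \<Rightarrow> nat) \<Rightarrow> bool" where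
  "has_mono_double_star n m N c \<longleftrightarrow>
     (\<exists>u v A B col. u < N \<and> v < N \<and> u \<noteq> v \<and>
        A \<subseteq> {0..<N} \<and> B \<subseteq> {0..<N} \<and> card A = n \<and> card B = m \<and>
        u \<notin> A \<and> v \<notin> A \<and> u \<notin> B \<and> v \<notin> B \<and> A \<inter> B = {} \<and>
        c u v = col \<and> (\<forall>a\<in>A. c u a = col) \<and> (\<forall>b\<in>B. c v b = col))"

definition gr_K3_double_star :: "nat \<Rightarrow> nat \<Rightarrow> nat \<Rightarrow> nat" where
  "gr_K3_double_star k n m =
     (LEAST N. \<forall>c. edge_coloring N k c \<longrightarrow>
                    has_rainbow_K3 N c \<or> has_mono_double_star n m N c)"

end

theory Submission
  imports Defs "HOL-Library.Ramsey"
begin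

(*
  The bound is witnessed by colourings of K_N, N one less than the bound, with neither a rainbow
  triangle nor a monochromatic S(n,m). A monochromatic S(n,m) whose central edge uv has colour col
  needs at least n+1 col-neighbours of u, m+1 of v, and n+m+2 of u and v together; on every edge of
  the colourings below one of these counts is too small.

  There are two base colourings: K_(n+2) in a single colour, and the 2-colouring of K_5 without
  monochromatic triangle (pentagon and pentagram) blown up into five classes of about n/2 vertices,
  each class coloured internally with a third colour, so that every colour degree is at most n.
  Every further colour j adds a block of m vertices, coloured internally with the base colour and
  joined to all earlier vertices in colour j. This substitution creates no rainbow triangle, and
  an edge of colour j has an endpoint with only m neighbours in colour j. Taking K_(n+2) with k-1
  blocks or the blown-up K_5 with k-3 blocks, whichever is larger, gives the bound; Ramsey's theorem
  makes the Gallai-Ramsey number well defined.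
*)

section \<open>Ramsey's theorem and the lower-bound principle\<close>

lemma ex_monochromatic_clique:
  "\<exists>N. \<forall>c. edge_coloring N k c \<longrightarrow>
     (\<exists>H col. H \<subseteq> {..<N} \<and> card H = s \<and> (\<forall>x\<in>H. \<forall>y\<in>H. x \<noteq> y \<longrightarrow> c x y = col))"
proof -
  obtain N :: nat where N: "partn_lst {..<N} (replicate k s) 2"
    using ramsey_full by blast
  have "\<exists>H col. H \<subseteq> {..<N} \<and> card H = s \<and> (\<forall>x\<in>H. \<forall>y\<in>H. x \<noteq> y \<longrightarrow> c x y = col)"
    if c: "edge_coloring N k c" for c
  proof -
    define f where "f e = c (Min e) (Max e)" for e :: "nat set"
    have f_pair: "f {x, y} = c x y" if "x < N" "y < N" "x \<noteq> y" for x y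
      using c that unfolding f_def edge_coloring_def
      by (cases "x < y") (auto simp: min_def max_def)
    have "f \<in> nsets {..<N} 2 \<rightarrow> {..<k}"
      using c f_pair by (auto elim!: nsets2_E simp: edge_coloring_def)
    then obtain col H where H: "H \<in> nsets {..<N} s" "f ` nsets H 2 \<subseteq> {col}"
      using partn_lstE[OF N] by (metis length_replicate nth_replicate)
    have "c x y = col" if "x \<in> H" "y \<in> H" "x \<noteq> y" for x y
    proof -
      have "{x, y} \<in> nsets H 2" using that by simp
      then have "f {x, y} = col" using H(2) by blast
      moreover have "x < N" "y < N" using H(1) that by (auto simp: nsets_def)
      ultimately show ?thesis using f_pair that by simp
    qed
    then show ?thesis
      using H(1) by (auto simp: nsets_def)
  qed
  then show ?thesis by blast
qed

lemma mono_clique_imp_mono_double_star: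
  assumes H: "H \<subseteq> {..<N}" "card H = n + m + 2"
    and mono: "\<forall>x\<in>H. \<forall>y\<in>H. x \<noteq> y \<longrightarrow> c x y = col"
  shows "has_mono_double_star n m N c"
proof -
  have "finite H" using H(1) finite_subset by blast
  obtain P where "P \<subseteq> H" "card P = 2"
    using H(2) obtain_subset_with_card_n[of 2 H] by auto
  then obtain u v where uv: "u \<in> H" "v \<in> H" "u \<noteq> v"
    by (auto simp: card_2_iff)
  have card_rest: "card (H - {u, v}) = n + m"
    using \<open>finite H\<close> uv H(2) by (simp add: card_Diff_subset)
  then obtain A where A: "A \<subseteq> H - {u, v}" "card A = n"
    using obtain_subset_with_card_n[of n "H - {u, v}"] by auto
  define B where "B = H - {u, v} - A"
  have "card B = m"
    using A \<open>finite H\<close> card_rest unfolding B_def by (simp add: card_Diff_subset finite_subset)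
  moreover have "A \<subseteq> {0..<N}" "B \<subseteq> {0..<N}" "u < N" "v < N"
    using A H(1) uv unfolding B_def by auto
  moreover have "u \<notin> A" "v \<notin> A" "u \<notin> B" "v \<notin> B" "A \<inter> B = {}"
    using A unfolding B_def by auto
  moreover have "c u v = col" "\<forall>a\<in>A. c u a = col" "\<forall>b\<in>B. c v b = col"
    using mono uv A unfolding B_def by auto
  ultimately show ?thesis
    unfolding has_mono_double_star_def using uv(3) A(2) by blast
qed

lemma ex_forced_mono_double_star:
  "\<exists>N. \<forall>c. edge_coloring N k c \<longrightarrow> has_mono_double_star n m N c"
proof -
  obtain N where N: "\<forall>c. edge_coloring N k c \<longrightarrow> (\<exists>H col. H \<subseteq> {..<N} \<and> card H = n + m + 2 \<and>
                    (\<forall>x\<in>H. \<forall>y\<in>H. x \<noteq> y \<longrightarrow> c x y = col))"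
    using ex_monochromatic_clique[of k "n + m + 2"] by (elim exE)
  show ?thesis
  proof (intro exI[of _ N] allI impI)
    fix c assume "edge_coloring N k c"
    then obtain H col where "H \<subseteq> {..<N}" "card H = n + m + 2"
      "\<forall>x\<in>H. \<forall>y\<in>H. x \<noteq> y \<longrightarrow> c x y = col"
      using N by blast
    then show "has_mono_double_star n m N c"
      by (rule mono_clique_imp_mono_double_star)
  qed
qed

lemma edge_coloring_mono: "N' \<le> N \<Longrightarrow> edge_coloring N k c \<Longrightarrow> edge_coloring N' k c"
  unfolding edge_coloring_def by simp

lemma has_rainbow_K3_mono: "N \<le> N' \<Longrightarrow> has_rainbow_K3 N c \<Longrightarrow> has_rainbow_K3 N' c"
  unfolding has_rainbow_K3_def by (meson order_less_le_trans)

lemma has_mono_double_star_mono: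
  assumes "N \<le> N'" "has_mono_double_star n m N c"
  shows "has_mono_double_star n m N' c"
proof -
  obtain u v A B col where "u < N" "v < N" "A \<subseteq> {0..<N}" "B \<subseteq> {0..<N}"
    "u \<noteq> v" "card A = n" "card B = m" "u \<notin> A" "v \<notin> A" "u \<notin> B" "v \<notin> B"
      "A \<inter> B = {}" "c u v = col" "\<forall>a\<in>A. c u a = col" "\<forall>b\<in>B. c v b = col"
    using assms(2) unfolding has_mono_double_star_def by blast
  moreover have "{0..<N} \<subseteq> {0..<N'}" using assms(1) by simp
  ultimately show ?thesis
    unfolding has_mono_double_star_def using assms(1)
    by (intro exI[of _ u] exI[of _ v] exI[of _ A] exI[of _ B] exI[of _ col]) auto
qed

lemma gr_K3_double_star_gt:
  assumes "edge_coloring N k c" "\<not> has_rainbow_K3 N c" "\<not> has_mono_double_star n m N c"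
  shows "N < gr_K3_double_star k n m"
proof (rule ccontr)
  let ?forced = "\<lambda>N. \<forall>c. edge_coloring N k c \<longrightarrow> has_rainbow_K3 N c \<or> has_mono_double_star n m N c"
  assume "\<not> N < gr_K3_double_star k n m"
  then have le: "Least ?forced \<le> N"
    unfolding gr_K3_double_star_def by simp
  \<comment> \<open>Without some N forcing the pattern, LEAST would be an arbitrary number.\<close>
  obtain N\<^sub>0 where "\<forall>c. edge_coloring N\<^sub>0 k c \<longrightarrow> has_mono_double_star n m N\<^sub>0 c"
    using ex_forced_mono_double_star[of k n m] by (elim exE)
  then have "?forced (Least ?forced)"
    by (intro LeastI[of ?forced N\<^sub>0]) simp
  then have "has_rainbow_K3 (Least ?forced) c \<or> has_mono_double_star n m (Least ?forced) c"
    using edge_coloring_mono[OF le assms(1)] by blast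
  then show False
    using assms(2,3) has_rainbow_K3_mono[OF le] has_mono_double_star_mono[OF le] by blast
qed

section \<open>Colour neighbourhoods\<close>

definition colour_nbhd :: "nat \<Rightarrow> (nat \<Rightarrow> nat \<Rightarrow> nat) \<Rightarrow> nat \<Rightarrow> nat \<Rightarrow> nat set" where
  "colour_nbhd N c col u = {x. x < N \<and> x \<noteq> u \<and> c u x = col}"

lemma finite_colour_nbhd [simp]: "finite (colour_nbhd N c col u)"
  unfolding colour_nbhd_def by simp

definition small_nbhds :: "nat \<Rightarrow> nat \<Rightarrow> nat \<Rightarrow> (nat \<Rightarrow> nat \<Rightarrow> nat) \<Rightarrow> bool" where
  "small_nbhds n m N c \<longleftrightarrow> (\<forall>u<N. \<forall>v<N. u \<noteq> v \<longrightarrow>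
     card (colour_nbhd N c (c u v) u) \<le> n \<or> card (colour_nbhd N c (c u v) v) \<le> m \<or>
     card (colour_nbhd N c (c u v) u \<union> colour_nbhd N c (c u v) v) \<le> n + m + 1)"

lemma small_nbhds_imp_no_mono_double_star:
  assumes c: "edge_coloring N k c" and small: "small_nbhds n m N c"
  shows "\<not> has_mono_double_star n m N c"
proof
  assume "has_mono_double_star n m N c"
  then obtain u v A B col where uv: "u < N" "v < N" "u \<noteq> v"
    and AB: "A \<subseteq> {0..<N}" "B \<subseteq> {0..<N}" "card A = n" "card B = m"
      "u \<notin> A" "v \<notin> A" "u \<notin> B" "v \<notin> B" "A \<inter> B = {}"
    and col: "c u v = col" "\<forall>a\<in>A. c u a = col" "\<forall>b\<in>B. c v b = col"
    unfolding has_mono_double_star_def by blast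
  have "finite A" "finite B" using AB(1,2) finite_subset by auto
  have "c v u = col" using c uv col(1) unfolding edge_coloring_def by metis
  then have sub_u: "insert v A \<subseteq> colour_nbhd N c col u"
    and sub_v: "insert u B \<subseteq> colour_nbhd N c col v"
    using uv AB col unfolding colour_nbhd_def by auto
  have "n + 1 \<le> card (colour_nbhd N c col u)"
    using card_mono[OF _ sub_u] \<open>finite A\<close> AB by simp
  moreover have "m + 1 \<le> card (colour_nbhd N c col v)"
    using card_mono[OF _ sub_v] \<open>finite B\<close> AB by simp
  moreover have "n + m + 2 \<le> card (colour_nbhd N c col u \<union> colour_nbhd N c col v)"
  proof -
    have "card (insert u (insert v (A \<union> B))) = n + m + 2"
      using uv AB \<open>finite A\<close> \<open>finite B\<close> by (simp add: card_Un_disjoint)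
    moreover have "insert u (insert v (A \<union> B)) \<subseteq> colour_nbhd N c col u \<union> colour_nbhd N c col v"
      using sub_u sub_v by auto
    ultimately show ?thesis by (metis card_mono finite_Un finite_colour_nbhd)
  qed
  ultimately show False
    using small uv col(1) unfolding small_nbhds_def by fastforce
qed

definition good_coloring :: "nat \<Rightarrow> nat \<Rightarrow> nat \<Rightarrow> nat \<Rightarrow> (nat \<Rightarrow> nat \<Rightarrow> nat) \<Rightarrow> bool" where
  "good_coloring k n m N c \<longleftrightarrow>
     edge_coloring N k c \<and> \<not> has_rainbow_K3 N c \<and> small_nbhds n m N c"

lemma good_coloring_imp_gr_K3_double_star_gt:
  "good_coloring k n m N c \<Longrightarrow> N < gr_K3_double_star k n m"
  unfolding good_coloring_def
  using gr_K3_double_star_gt small_nbhds_imp_no_mono_double_star by blast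

section \<open>Joining blocks in fresh colours\<close>

text \<open>All vertices from b on form the new block; its size m is fixed by the vertex set
  {..<b + m} on which the colouring is used.\<close>

definition join_block :: "nat \<Rightarrow> nat \<Rightarrow> (nat \<Rightarrow> nat \<Rightarrow> nat) \<Rightarrow> nat \<Rightarrow> nat \<Rightarrow> nat" where
  "join_block b j c x y = (if x < b \<and> y < b then c x y else if b \<le> x \<and> b \<le> y then 0 else j)"

lemma colour_nbhd_join_block_old:
  "u < b \<Longrightarrow> col \<noteq> j \<Longrightarrow> colour_nbhd (b + m) (join_block b j c) col u = colour_nbhd b c col u"
  unfolding colour_nbhd_def join_block_def by auto

lemma colour_nbhd_join_block_cross:
  assumes "u < b" "\<forall>x<b. x \<noteq> u \<longrightarrow> c u x \<noteq> j"
  shows "colour_nbhd (b + m) (join_block b j c) j u = {b..<b + m}"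
  using assms unfolding colour_nbhd_def join_block_def by (auto simp: not_less)

lemma colour_nbhd_join_block_new:
  "b \<le> u \<Longrightarrow> j \<noteq> 0 \<Longrightarrow> colour_nbhd (b + m) (join_block b j c) 0 u = {b..<b + m} - {u}"
  unfolding colour_nbhd_def join_block_def by auto

lemma small_nbhds_join_block:
  assumes small: "small_nbhds n m b c" and fresh: "\<forall>x<b. \<forall>y<b. x \<noteq> y \<longrightarrow> c x y \<noteq> j"
    and "j \<noteq> 0" "m \<le> n"
  shows "small_nbhds n m (b + m) (join_block b j c)"
  unfolding small_nbhds_def
proof (intro allI impI)
  fix u v assume uv: "u < b + m" "v < b + m" "u \<noteq> v"
  let ?c = "join_block b j c"
  let ?nb = "\<lambda>w. colour_nbhd (b + m) ?c (?c u v) w"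
  consider "u < b" "v < b" | "u < b" "b \<le> v" | "b \<le> u" "v < b" | "b \<le> u" "b \<le> v"
    by linarith
  then show "card (?nb u) \<le> n \<or> card (?nb v) \<le> m \<or> card (?nb u \<union> ?nb v) \<le> n + m + 1"
  proof cases
    case 1
    then have "?c u v = c u v" "c u v \<noteq> j" using fresh uv by (auto simp: join_block_def)
    then show ?thesis
      using small 1 uv by (simp add: colour_nbhd_join_block_old small_nbhds_def)
  next
    case 2
    then have "?nb u = {b..<b + m}"
      using fresh colour_nbhd_join_block_cross[of u b c j m] by (simp add: join_block_def)
    then show ?thesis using \<open>m \<le> n\<close> by simp
  next
    case 3
    then have "?nb v = {b..<b + m}"
      using fresh colour_nbhd_join_block_cross[of v b c j m] by (simp add: join_block_def)
    then show ?thesis by simp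
  next
    case 4
    then have "?nb u = {b..<b + m} - {u}"
      using \<open>j \<noteq> 0\<close> by (simp add: join_block_def colour_nbhd_join_block_new)
    then have "card (?nb u) \<le> n"
      using \<open>m \<le> n\<close> card_Diff1_le[of "{b..<b + m}" u] by simp
    then show ?thesis by blast
  qed
qed

lemma good_coloring_join_block:
  assumes good: "good_coloring k n m b c" and fresh: "\<forall>x<b. \<forall>y<b. x \<noteq> y \<longrightarrow> c x y \<noteq> j"
    and j: "0 < j" "j < k" and "m \<le> n"
  shows "good_coloring k n m (b + m) (join_block b j c)"
proof -
  have "edge_coloring (b + m) k (join_block b j c)"
    using good j unfolding good_coloring_def edge_coloring_def join_block_def by auto
  moreover have "\<not> has_rainbow_K3 (b + m) (join_block b j c)"
    using good unfolding good_coloring_def has_rainbow_K3_def join_block_def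
    by (auto split: if_splits)
  ultimately show ?thesis
    using good small_nbhds_join_block fresh j \<open>m \<le> n\<close> unfolding good_coloring_def by auto
qed

primrec join_blocks :: "nat \<Rightarrow> nat \<Rightarrow> nat list \<Rightarrow> (nat \<Rightarrow> nat \<Rightarrow> nat) \<Rightarrow> nat \<Rightarrow> nat \<Rightarrow> nat" where
  "join_blocks b m [] c = c"
| "join_blocks b m (j # js) c = join_blocks (b + m) m js (join_block b j c)"

lemma good_coloring_join_blocks:
  assumes "good_coloring k n m b c" "m \<le> n" "distinct js" "\<forall>j\<in>set js. 0 < j \<and> j < k"
    and "\<forall>x<b. \<forall>y<b. x \<noteq> y \<longrightarrow> c x y \<notin> set js"
  shows "good_coloring k n m (b + length js * m) (join_blocks b m js c)"
  using assms
proof (induction js arbitrary: b c)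
  case Nil
  then show ?case by simp
next
  case (Cons j js)
  have "good_coloring k n m (b + m) (join_block b j c)"
    using Cons.prems by (intro good_coloring_join_block) auto
  moreover have "\<forall>x<b + m. \<forall>y<b + m. x \<noteq> y \<longrightarrow> join_block b j c x y \<notin> set js"
    using Cons.prems unfolding join_block_def by auto
  ultimately have "good_coloring k n m (b + m + length js * m) (join_blocks (b + m) m js (join_block b j c))"
    using Cons.IH Cons.prems by simp
  then show ?case by (simp add: add.assoc)
qed

lemma good_coloring_const:
  assumes "0 < k" "1 \<le> m"
  shows "good_coloring k n m (n + 2) (\<lambda>_ _. 0)"
proof -
  have "small_nbhds n m (n + 2) (\<lambda>_ _. 0)"
    unfolding small_nbhds_def
  proof (intro allI impI disjI2)
    fix u v
    have "card (colour_nbhd (n + 2) (\<lambda>_ _. 0) 0 u \<union> colour_nbhd (n + 2) (\<lambda>_ _. 0) 0 v)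
        \<le> card {..<n + 2}"
      by (rule card_mono) (auto simp: colour_nbhd_def)
    then show "card (colour_nbhd (n + 2) (\<lambda>_ _. 0) 0 u \<union> colour_nbhd (n + 2) (\<lambda>_ _. 0) 0 v)
        \<le> n + m + 1"
      using assms(2) by simp
  qed
  then show ?thesis
    using assms(1) unfolding good_coloring_def edge_coloring_def has_rainbow_K3_def by simp
qed

section \<open>The blown-up pentagon colouring\<close>

text \<open>Since 4 is -1 modulo 5, the colour of xy is the cyclic distance of x and y modulo 5: 0 inside
  a residue class, 1 along the pentagon and 2 along the pentagram.\<close>

definition pentagon_coloring :: "nat \<Rightarrow> nat \<Rightarrow> nat" where
  "pentagon_coloring x y = min ((x + 4 * y) mod 5) ((y + 4 * x) mod 5)"

lemma pentagon_coloring_commute: "pentagon_coloring x y = pentagon_coloring y x"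
  unfolding pentagon_coloring_def by (simp add: min.commute)

lemma pentagon_coloring_mod: "pentagon_coloring x y = pentagon_coloring (x mod 5) (y mod 5)"
proof -
  have "(a + 4 * (b mod 5)) mod 5 = (a + 4 * b) mod 5" for a b :: nat
    by (metis mod_add_right_eq mod_mult_right_eq)
  then show ?thesis unfolding pentagon_coloring_def by (simp add: mod_add_left_eq)
qed

lemma residue_5_cases: "(a::nat) < 5 \<Longrightarrow> a = 0 \<or> a = 1 \<or> a = 2 \<or> a = 3 \<or> a = 4"
  by auto

lemma pentagon_coloring_le_2: "pentagon_coloring x y \<le> 2"
  using residue_5_cases[of "x mod 5"] residue_5_cases[of "y mod 5"]
  by (subst pentagon_coloring_mod) (auto simp: pentagon_coloring_def)

lemma pentagon_coloring_eq_0_iff: "pentagon_coloring x y = 0 \<longleftrightarrow> x mod 5 = y mod 5"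
  using residue_5_cases[of "x mod 5"] residue_5_cases[of "y mod 5"]
  by (subst pentagon_coloring_mod) (auto simp: pentagon_coloring_def)

lemma pentagon_coloring_cong:
  "x mod 5 = y mod 5 \<Longrightarrow> pentagon_coloring x z = pentagon_coloring y z"
  by (metis pentagon_coloring_mod)

lemma pentagon_coloring_neighbour_mod:
  "x mod 5 \<in> {(u + pentagon_coloring u x) mod 5, (u + 4 * pentagon_coloring u x) mod 5}"
proof -
  have "x mod 5 \<in> {(u mod 5 + pentagon_coloring (u mod 5) (x mod 5)) mod 5,
                    (u mod 5 + 4 * pentagon_coloring (u mod 5) (x mod 5)) mod 5}"
    using residue_5_cases[of "u mod 5"] residue_5_cases[of "x mod 5"]
    by (auto simp: pentagon_coloring_def)
  then show ?thesis by (simp add: mod_add_left_eq flip: pentagon_coloring_mod)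
qed

lemma pentagon_coloring_no_rainbow_K3: "\<not> has_rainbow_K3 N pentagon_coloring"
proof
  assume "has_rainbow_K3 N pentagon_coloring"
  then obtain x y z where distinct: "pentagon_coloring x y \<noteq> pentagon_coloring y z"
    "pentagon_coloring y z \<noteq> pentagon_coloring x z" "pentagon_coloring x y \<noteq> pentagon_coloring x z"
    unfolding has_rainbow_K3_def by blast
  have "pentagon_coloring x y \<noteq> 0"
    using distinct pentagon_coloring_cong[of x y z] by (auto simp: pentagon_coloring_eq_0_iff)
  moreover have "pentagon_coloring y z \<noteq> 0"
    using distinct pentagon_coloring_cong[of z y x]
    by (auto simp: pentagon_coloring_eq_0_iff pentagon_coloring_commute)
  moreover have "pentagon_coloring x z \<noteq> 0"
    using distinct pentagon_coloring_cong[of z x y]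
    by (auto simp: pentagon_coloring_eq_0_iff pentagon_coloring_commute)
  ultimately show False
    using distinct pentagon_coloring_le_2[of x y] pentagon_coloring_le_2[of y z]
      pentagon_coloring_le_2[of x z] by linarith
qed

lemma card_residues_below_le:
  fixes p h e :: nat
  assumes "finite R"
  shows "card {x. x < p * h + e \<and> x mod p \<in> R} \<le> card R * h + e"
proof -
  let ?blocks = "\<Union>r\<in>R. (\<lambda>q. p * q + r) ` {..<h}"
  have "{x. x < p * h + e \<and> x mod p \<in> R} \<subseteq> ?blocks \<union> {p * h..<p * h + e}"
  proof
    fix x assume x: "x \<in> {x. x < p * h + e \<and> x mod p \<in> R}"
    show "x \<in> ?blocks \<union> {p * h..<p * h + e}"
    proof (cases "x < p * h")
      case True
      then have "x div p < h"
        by (metis div_less_iff_less_mult mult.commute mult_0 not_less_zero not_gr0)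
      moreover have "x = p * (x div p) + x mod p" by simp
      ultimately show ?thesis using x by blast
    next
      case False
      then show ?thesis using x by simp
    qed
  qed
  then have "card {x. x < p * h + e \<and> x mod p \<in> R} \<le> card (?blocks \<union> {p * h..<p * h + e})"
    using assms by (intro card_mono) auto
  also have "\<dots> \<le> card ?blocks + e"
    using card_Un_le[of ?blocks "{p * h..<p * h + e}"] by simp
  also have "card ?blocks \<le> (\<Sum>r\<in>R. card ((\<lambda>q. p * q + r) ` {..<h}))"
    using assms by (rule card_UN_le)
  also have "\<dots> \<le> (\<Sum>r\<in>R. h)"
    by (rule sum_mono) (metis card_image_le card_lessThan finite_lessThan)
  finally show ?thesis by simp
qed

lemma card_colour_nbhd_pentagon_coloring:
  "card (colour_nbhd (5 * h + e) pentagon_coloring col u) \<le> 2 * h + e"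
proof -
  let ?R = "{(u + col) mod 5, (u + 4 * col) mod 5}"
  have "colour_nbhd (5 * h + e) pentagon_coloring col u \<subseteq> {x. x < 5 * h + e \<and> x mod 5 \<in> ?R}"
    using pentagon_coloring_neighbour_mod unfolding colour_nbhd_def by blast
  then have "card (colour_nbhd (5 * h + e) pentagon_coloring col u)
      \<le> card {x. x < 5 * h + e \<and> x mod 5 \<in> ?R}"
    by (intro card_mono) auto
  also have "\<dots> \<le> card ?R * h + e"
    by (rule card_residues_below_le) simp
  also have "\<dots> \<le> 2 * h + e"
    by (intro add_right_mono mult_right_mono) (auto simp: card_insert_if)
  finally show ?thesis .
qed

lemma good_coloring_pentagon:
  assumes "3 \<le> k" "2 * h + e \<le> n"
  shows "good_coloring k n m (5 * h + e) pentagon_coloring"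
proof -
  have "pentagon_coloring x y < k" for x y
    using assms(1) pentagon_coloring_le_2[of x y] by linarith
  then have "edge_coloring (5 * h + e) k pentagon_coloring"
    using pentagon_coloring_commute unfolding edge_coloring_def by blast
  moreover have "small_nbhds n m (5 * h + e) pentagon_coloring"
    using order_trans[OF card_colour_nbhd_pentagon_coloring assms(2)]
    unfolding small_nbhds_def by blast
  ultimately show ?thesis
    using pentagon_coloring_no_rainbow_K3 unfolding good_coloring_def by blast
qed

lemma good_coloring_const_blocks:
  assumes "0 < k" "1 \<le> m" "m \<le> n"
  shows "good_coloring k n m (n + 2 + (k - 1) * m) (join_blocks (n + 2) m [1..<k] (\<lambda>_ _. 0))"
  using good_coloring_join_blocks[OF good_coloring_const[OF assms(1,2)], where js = "[1..<k]"] assms(3)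
  by simp

lemma good_coloring_pentagon_blocks:
  assumes "3 \<le> k" "2 * h + e \<le> n" "m \<le> n"
  shows "good_coloring k n m (5 * h + e + (k - 3) * m)
           (join_blocks (5 * h + e) m [3..<k] pentagon_coloring)"
proof -
  have "pentagon_coloring x y < 3" for x y
    using pentagon_coloring_le_2[of x y] by linarith
  then show ?thesis
    using good_coloring_join_blocks[OF good_coloring_pentagon[OF assms(1,2)], where js = "[3..<k]"]
      assms(3) by (simp add: not_le)
qed

theorem proposition3:
  fixes n m k :: nat
  assumes "n \<ge> m" and "m \<ge> 1" and "k \<ge> 3"
  shows "gr_K3_double_star k n m \<ge>
           (if even n then max (5 * (n div 2)) (n + 2 * m + 1) + m * (k - 3) + 1
            else max (5 * ((n - 1) div 2)) (n + 2 * m + 1) + m * (k - 3) + 2)"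
proof -
  have half: "(n - 1) div 2 = n div 2" if "odd n"
    using that by (metis odd_two_times_div_two_nat diff_Suc_1 nonzero_mult_div_cancel_left
        zero_neq_numeral div_mult_self1_is_m)
  show ?thesis
  proof (cases "5 * (n div 2) \<le> n + 2 * m + 1")
    case True
    have "n + 2 + (k - 1) * m < gr_K3_double_star k n m"
      using assms by (intro good_coloring_imp_gr_K3_double_star_gt[OF good_coloring_const_blocks]) auto
    moreover have "(k - 1) * m = 2 * m + m * (k - 3)"
      using assms(3) by (simp add: algebra_simps le_Suc_ex)
    ultimately show ?thesis
      using True half by (auto simp: max_def)
  next
    case False
    have "5 * (n div 2) + n mod 2 + (k - 3) * m < gr_K3_double_star k n m"
      using assms
      by (intro good_coloring_imp_gr_K3_double_star_gt[OF good_coloring_pentagon_blocks]) auto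
    then show ?thesis
      using False half by (auto simp: max_def mult.commute odd_iff_mod_2_eq_one)
  qed
qed

end
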